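(* Let $X(1),\dots,X(n)$ be UVs with values in $\mathscr{X}$ and $Y(1),\dots,Y(n)$ UVs with values in $\mathscr{Y}$ on a common sample space, and let $X(1:n)=(X(1),\dots,X(n))$, $Y(1:n)=(Y(1),\dots,Y(n))$. Assume $[\![X(1:n)]\!]=[\![X(1)]\!]\times\cdots\times[\![X(n)]\!]$ and, for every $x(1:n)\in[\![X(1:n)]\!]$, $[\![Y(1:n)|x(1:n)]\!]=[\![Y(1)|x(1)]\!]\times\cdots\times[\![Y(n)|x(n)]\!]$. Let $$0\le\delta<\min_{1\le i\le n,\ x(i)\in[\![X(i)]\!]}m_{\mathscr{Y}}([\![Y(i)|x(i)]\!]),$$ and assume either $(X(1:n),Y(1:n))\stackrel{d}{\leftrightarrow}(0,\delta^n)$ or $(X(1:n),Y(1:n))\stackrel{a}{\leftrightarrow}(1,\delta^n)$. For each $i$ let $[\![Y(i)|X(i)]\!]^*_\delta$ be a $\delta$-overlap family of $[\![Y(i)]\!]$, and let $\prod_{i=1}^n[\![Y(i)|X(i)]\!]^*_\delta=\{S_1\times\cdots\times S_n: S_i\in[\![Y(i)|X(i)]\!]^*_\delta\}$. Under the product uncertainty assumption, the following hold: (1) $\prod_{i=1}^n[\![Y(i)|X(i)]\!]^*_\delta$ is a covering of $[\![Y(1:n)]\!]$; (2) every $S\in\prod_{i=1}^n[\![Y(i)|X(i)]\!]^*_\delta$ is $\delta^n$-connected via $[\![Y(1:n)|X(1:n)]\!]$ and contains at least one conditional range $[\![Y(1:n)|x(1:n)]\!]$; (3) for every $x(1:n)\in[\![X(1:n)]\!]$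 there is $S\in\prod_{i=1}^n[\![Y(i)|X(i)]\!]^*_\delta$ with $[\![Y(1:n)|x(1:n)]\!]\subseteq S$; (4) for all $S_1,S_2\in\prod_{i=1}^n[\![Y(i)|X(i)]\!]^*_\delta$ (distinct), $m_{\mathscr{Y}}(S_1\cap S_2)/m_{\mathscr{Y}}([\![Y(1:n)]\!])\le\delta(\hat\delta(n))^{n-1}$, where $\hat\delta(n)=\max_{1\le i\le n,\ S\in[\![Y(i)|X(i)]\!]^*_\delta} m_{\mathscr{Y}}(S)/m_{\mathscr{Y}}([\![Y(i)]\!])$.
   Context: A UV is a map $U$ from a sample space $\Omega$ to a set; $[\![U]\!]=\{U(\omega)\}$; $[\![U|w]\!]=\{U(\omega):W(\omega)=w\}$, $[\![U|W]\!]=\{[\![U|w]\!]:w\in[\![W]\!]\}$; $X(1:n)(\omega)=(X(1)(\omega),\dots,X(n)(\omega))$. An uncertainty function on a set $\mathscr{U}$ is a map $m$ on subsets of $\mathscr{U}$ with $m(\emptyset)=0$, $0<m(S)<\infty$ for nonempty $S$, $\max\{m(S_1),m(S_2)\}\le m(S_1\cup S_2)$. Here $m_{\mathscr{X}}$ (resp. $m_{\mathscr{Y}}$) is defined on subsets of $\mathscr{X}^k$ (resp. $\mathscr{Y}^k$) for every $k\ge1$, is an uncertainty function on each, and $m_{\mathscr{Y}}(\mathscr{Y}^k)=1$ for all $k$. Product uncertainty assumption: for every $k$ and all $S_1,\dots,S_k\subseteq\mathscr{Y}$, $m_{\mathscr{Y}}(S_1\times\cdots\times S_k)=\prod_i m_{\mathscr{Y}}(S_i)$.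 Association: $\mathscr{A}(X;Y)=\{m_{\mathscr{X}}([\![X|y_1]\!]\cap[\![X|y_2]\!])/m_{\mathscr{X}}([\![X]\!]):y_1\ne y_2\in[\![Y]\!]\}\setminus\{0\}$, $\mathscr{A}(Y;X)=\{m_{\mathscr{Y}}([\![Y|x_1]\!]\cap[\![Y|x_2]\!])/m_{\mathscr{Y}}([\![Y]\!]):x_1\ne x_2\in[\![X]\!]\}\setminus\{0\}$. $\mathscr{A}\succ\delta$: all elements $>\delta$ (false for $\emptyset$); $\mathscr{A}\preceq\delta$: all elements $\le\delta$ (true for $\emptyset$). $(X,Y)\stackrel{d}{\leftrightarrow}(\delta_1,\delta_2)$ iff $\mathscr{A}(X;Y)\succ\delta_1,\mathscr{A}(Y;X)\succ\delta_2$; $(X,Y)\stackrel{a}{\leftrightarrow}(\delta_1,\delta_2)$ iff $\mathscr{A}(X;Y)\preceq\delta_1,\mathscr{A}(Y;X)\preceq\delta_2$. $\delta$-connectedness and overlap families: for UVs $U$ (with uncertainty function $m_{\mathscr{U}}$) and $W$, $u,u'\in[\![U]\!]$ are $\delta$-connected via $[\![U|W]\!]$ if there are $w_1,\dots,w_N\in[\![W]\!]$ with $u\in[\![U|w_1]\!]$, $u'\in[\![U|w_N]\!]$, $m_{\mathscr{U}}([\![U|w_i]\!]\cap[\![U|w_{i-1}]\!])/m_{\mathscr{U}}([\![U]\!])>\delta$ for $1<i\le N$; a set is $\delta$-connected if all pairs of its points are. A $\delta$-overlap family $[\![U|W]\!]^*_\delta$ is a family of distinct subsets covering $[\![U]\!]$,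 of largest cardinality among covering families with (i) each member $\delta$-connected and containing some $[\![U|w]\!]$; (ii) distinct members $S_1,S_2$ satisfy $m_{\mathscr{U}}(S_1\cap S_2)\le\delta\,m_{\mathscr{U}}([\![U]\!])$; (iii) each $[\![U|w]\!]$ contained in some member. *)

theory Defs
  imports Complex_Main
begin

text \<open>Uncertain variables (UVs) are maps from the sample space (a type) to a value set.\<close>

definition rng :: "('w \<Rightarrow> 'u) \<Rightarrow> 'u set" where
  "rng U = U ` UNIV"

definition cond_range :: "('w \<Rightarrow> 'u) \<Rightarrow> ('w \<Rightarrow> 'v) \<Rightarrow> 'v \<Rightarrow> 'u set" where
  "cond_range U W w = {U \<omega> | \<omega>. W \<omega> = w}"

definition cond_ranges :: "('w \<Rightarrow> 'u) \<Rightarrow> ('w \<Rightarrow> 'v) \<Rightarrow> 'u set set" where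
  "cond_ranges U W = cond_range U W ` rng W"

definition unc_fun :: "'u set \<Rightarrow> ('u set \<Rightarrow> real) \<Rightarrow> bool" where
  "unc_fun U m \<longleftrightarrow> m {} = 0 \<and> (\<forall>S. S \<subseteq> U \<longrightarrow> S \<noteq> {} \<longrightarrow> 0 < m S) \<and>
     (\<forall>S1 S2. S1 \<subseteq> U \<longrightarrow> S2 \<subseteq> U \<longrightarrow> max (m S1) (m S2) \<le> m (S1 \<union> S2))"

text \<open>Tuples in U^k are represented as lists of length k; the product S_1 x ... x S_k.\<close>
definition prod_set :: "nat \<Rightarrow> (nat \<Rightarrow> 'u set) \<Rightarrow> 'u list set" where
  "prod_set k S = {xs. length xs = k \<and> (\<forall>i<k. xs ! i \<in> S i)}"

text \<open>The tuple UV U(1:n), with indices 0..n-1.\<close>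
definition tuple_uv :: "nat \<Rightarrow> (nat \<Rightarrow> 'w \<Rightarrow> 'u) \<Rightarrow> 'w \<Rightarrow> 'u list" where
  "tuple_uv n U \<omega> = map (\<lambda>i. U i \<omega>) [0..<n]"

text \<open>Uncertainty of a subset of U = U^1 (as a set of one-element lists).\<close>
definition m1 :: "('u list set \<Rightarrow> real) \<Rightarrow> 'u set \<Rightarrow> real" where
  "m1 m S = m ((\<lambda>y. [y]) ` S)"

definition assoc :: "('u set \<Rightarrow> real) \<Rightarrow> ('w \<Rightarrow> 'u) \<Rightarrow> ('w \<Rightarrow> 'v) \<Rightarrow> real set" where
  "assoc mU U W =
     {mU (cond_range U W w1 \<inter> cond_range U W w2) / mU (rng U) | w1 w2.
        w1 \<in> rng W \<and> w2 \<in> rng W \<and> w1 \<noteq> w2} - {0}"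

definition succ_rel :: "real set \<Rightarrow> real \<Rightarrow> bool" where
  "succ_rel A d \<longleftrightarrow> A \<noteq> {} \<and> (\<forall>a\<in>A. a > d)"

definition preceq_rel :: "real set \<Rightarrow> real \<Rightarrow> bool" where
  "preceq_rel A d \<longleftrightarrow> (\<forall>a\<in>A. a \<le> d)"

definition disassoc :: "('x set \<Rightarrow> real) \<Rightarrow> ('y set \<Rightarrow> real) \<Rightarrow> ('w \<Rightarrow> 'x) \<Rightarrow> ('w \<Rightarrow> 'y)
    \<Rightarrow> real \<Rightarrow> real \<Rightarrow> bool" where
  "disassoc mX mY X Y d1 d2 \<longleftrightarrow> succ_rel (assoc mX X Y) d1 \<and> succ_rel (assoc mY Y X) d2"

definition assoc_rel :: "('x set \<Rightarrow> real) \<Rightarrow> ('y set \<Rightarrow> real) \<Rightarrow> ('w \<Rightarrow> 'x) \<Rightarrow> ('w \<Rightarrow> 'y)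
    \<Rightarrow> real \<Rightarrow> real \<Rightarrow> bool" where
  "assoc_rel mX mY X Y d1 d2 \<longleftrightarrow> preceq_rel (assoc mX X Y) d1 \<and> preceq_rel (assoc mY Y X) d2"

definition delta_connected :: "('u set \<Rightarrow> real) \<Rightarrow> ('w \<Rightarrow> 'u) \<Rightarrow> ('w \<Rightarrow> 'v) \<Rightarrow> real
    \<Rightarrow> 'u \<Rightarrow> 'u \<Rightarrow> bool" where
  "delta_connected mU U W d u u' \<longleftrightarrow>
     (\<exists>ws. ws \<noteq> [] \<and> set ws \<subseteq> rng W \<and>
        u \<in> cond_range U W (hd ws) \<and> u' \<in> cond_range U W (last ws) \<and>
        (\<forall>i. 0 < i \<and> i < length ws \<longrightarrow>
           mU (cond_range U W (ws ! i) \<inter> cond_range U W (ws ! (i - 1))) / mU (rng U) > d))"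

definition delta_connected_set :: "('u set \<Rightarrow> real) \<Rightarrow> ('w \<Rightarrow> 'u) \<Rightarrow> ('w \<Rightarrow> 'v) \<Rightarrow> real
    \<Rightarrow> 'u set \<Rightarrow> bool" where
  "delta_connected_set mU U W d S \<longleftrightarrow> (\<forall>u\<in>S. \<forall>u'\<in>S. delta_connected mU U W d u u')"

definition admissible_family :: "('u set \<Rightarrow> real) \<Rightarrow> ('w \<Rightarrow> 'u) \<Rightarrow> ('w \<Rightarrow> 'v) \<Rightarrow> real
    \<Rightarrow> 'u set set \<Rightarrow> bool" where
  "admissible_family mU U W d F \<longleftrightarrow>
     \<Union>F = rng U \<and>
     (\<forall>S\<in>F. delta_connected_set mU U W d S \<and> (\<exists>w\<in>rng W. cond_range U W w \<subseteq> S)) \<and>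
     (\<forall>S1\<in>F. \<forall>S2\<in>F. S1 \<noteq> S2 \<longrightarrow> mU (S1 \<inter> S2) \<le> d * mU (rng U)) \<and>
     (\<forall>w\<in>rng W. \<exists>S\<in>F. cond_range U W w \<subseteq> S)"

text \<open>A delta-overlap family: admissible and of largest cardinality among admissible families
  (cardinality comparison via injections, so no finiteness is assumed).\<close>
definition overlap_family :: "('u set \<Rightarrow> real) \<Rightarrow> ('w \<Rightarrow> 'u) \<Rightarrow> ('w \<Rightarrow> 'v) \<Rightarrow> real
    \<Rightarrow> 'u set set \<Rightarrow> bool" where
  "overlap_family mU U W d F \<longleftrightarrow>
     admissible_family mU U W d F \<and>
     (\<forall>F'. admissible_family mU U W d F' \<longrightarrow> (\<exists>f. inj_on f F' \<and> f ` F' \<subseteq> F))"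

end

(* Everything factors over coordinates: conditional ranges of the tuple are products, and the
   uncertainty of a product set is the product of the uncertainties of its factors. Covering and
   the inclusion of conditional ranges therefore hold coordinatewise. For connectedness, two
   conditioning tuples are joined by changing one coordinate at a time along the chains given by
   the coordinate families; the overlap ratio of each such step is a product of n factors, the
   changed one above delta and every other one at least m(C) > delta, hence it exceeds delta^n.
   The bound on overlaps is the same product, with a factor at most delta in a coordinate where
   the two product sets differ and factors at most dhat elsewhere. *)

theory Submission
  imports Defs
begin

lemma rtrancl_iff_chain:
  "(a, b) \<in> R\<^sup>* \<longleftrightarrow>
     (\<exists>ws. ws \<noteq> [] \<and> hd ws = a \<and> last ws = b \<and>
        (\<forall>i. 0 < i \<and> i < length ws \<longrightarrow> (ws ! (i - 1), ws ! i) \<in> R))"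
proof
  assume "(a, b) \<in> R\<^sup>*"
  then obtain k f where f: "f 0 = a" "f k = b" "\<forall>i<k. (f i, f (Suc i)) \<in> R"
    by (auto simp: rtrancl_power relpow_fun_conv)
  have "(map f [0..<Suc k] ! (i - 1), map f [0..<Suc k] ! i) \<in> R" if "0 < i" "i < Suc k" for i
    using f(3) that by (cases i) (auto simp del: upt_Suc)
  then show "\<exists>ws. ws \<noteq> [] \<and> hd ws = a \<and> last ws = b \<and>
        (\<forall>i. 0 < i \<and> i < length ws \<longrightarrow> (ws ! (i - 1), ws ! i) \<in> R)"
    using f by (intro exI[of _ "map f [0..<Suc k]"]) (auto simp: hd_map last_map simp del: upt_Suc)
next
  assume "\<exists>ws. ws \<noteq> [] \<and> hd ws = a \<and> last ws = b \<and>
        (\<forall>i. 0 < i \<and> i < length ws \<longrightarrow> (ws ! (i - 1), ws ! i) \<in> R)"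
  then obtain ws where ws: "ws \<noteq> []" "hd ws = a" "last ws = b"
    "\<forall>i. 0 < i \<and> i < length ws \<longrightarrow> (ws ! (i - 1), ws ! i) \<in> R" by blast
  have "(ws ! i, ws ! Suc i) \<in> R" if "Suc i < length ws" for i
    using ws(4) that by (metis diff_Suc_1 zero_less_Suc)
  then have "(ws ! 0, ws ! (length ws - 1)) \<in> R ^^ (length ws - 1)"
    unfolding relpow_fun_conv by (intro exI[of _ "(!) ws"]) auto
  then show "(a, b) \<in> R\<^sup>*"
    using ws by (auto simp: hd_conv_nth last_conv_nth intro: relpow_imp_rtrancl)
qed

definition overlap_rel :: "('u set \<Rightarrow> real) \<Rightarrow> ('w \<Rightarrow> 'u) \<Rightarrow> ('w \<Rightarrow> 'v) \<Rightarrow> real \<Rightarrow> ('v \<times> 'v) set"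
  where "overlap_rel mU U W d =
    {(w, w'). w \<in> rng W \<and> w' \<in> rng W \<and>
       d < mU (cond_range U W w' \<inter> cond_range U W w) / mU (rng U)}"

lemma rng_if_in_cond_range: "u \<in> cond_range U W w \<Longrightarrow> w \<in> rng W"
  by (auto simp: cond_range_def rng_def)

lemma Union_cond_range: "(\<Union>w\<in>rng W. cond_range U W w) = rng U"
  by (auto simp: cond_range_def rng_def)

lemma delta_connected_iff_rtrancl:
  "delta_connected mU U W d u u' \<longleftrightarrow>
     (\<exists>w w'. u \<in> cond_range U W w \<and> u' \<in> cond_range U W w' \<and>
        (w, w') \<in> (overlap_rel mU U W d)\<^sup>*)"
proof
  assume "delta_connected mU U W d u u'"
  then obtain ws where ws: "ws \<noteq> []" "set ws \<subseteq> rng W"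
    "u \<in> cond_range U W (hd ws)" "u' \<in> cond_range U W (last ws)"
    "\<forall>i. 0 < i \<and> i < length ws \<longrightarrow>
       d < mU (cond_range U W (ws ! i) \<inter> cond_range U W (ws ! (i - 1))) / mU (rng U)"
    unfolding delta_connected_def by blast
  have "(hd ws, last ws) \<in> (overlap_rel mU U W d)\<^sup>*"
    unfolding rtrancl_iff_chain overlap_rel_def using ws(1,2,5)
    by (intro exI[of _ ws]) (auto simp: subset_iff)
  with ws(3,4) show "\<exists>w w'. u \<in> cond_range U W w \<and> u' \<in> cond_range U W w' \<and>
        (w, w') \<in> (overlap_rel mU U W d)\<^sup>*" by blast
next
  assume "\<exists>w w'. u \<in> cond_range U W w \<and> u' \<in> cond_range U W w' \<and>
        (w, w') \<in> (overlap_rel mU U W d)\<^sup>*"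
  then obtain w w' ws where ws: "u \<in> cond_range U W w" "u' \<in> cond_range U W w'"
    "ws \<noteq> []" "hd ws = w" "last ws = w'"
    "\<forall>i. 0 < i \<and> i < length ws \<longrightarrow> (ws ! (i - 1), ws ! i) \<in> overlap_rel mU U W d"
    unfolding rtrancl_iff_chain by blast
  have "ws ! i \<in> rng W" if "i < length ws" for i
  proof (cases i)
    case 0
    then show ?thesis using ws(1,3,4) rng_if_in_cond_range by (auto simp: hd_conv_nth)
  next
    case (Suc j)
    then show ?thesis using ws(6) that by (auto simp: overlap_rel_def)
  qed
  then show "delta_connected mU U W d u u'"
    unfolding delta_connected_def using ws
    by (intro exI[of _ ws]) (auto simp: overlap_rel_def in_set_conv_nth)
qed

lemma prod_set_Int: "prod_set n A \<inter> prod_set n B = prod_set n (\<lambda>i. A i \<inter> B i)"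
  by (auto simp: prod_set_def)

lemma prod_set_mono: "(\<And>i. i < n \<Longrightarrow> A i \<subseteq> B i) \<Longrightarrow> prod_set n A \<subseteq> prod_set n B"
  by (auto simp: prod_set_def)

lemma prod_set_cong: "(\<And>i. i < n \<Longrightarrow> A i = B i) \<Longrightarrow> prod_set n A = prod_set n B"
  by (auto simp: prod_set_def)

lemma map_in_prod_set_iff: "map x [0..<n] \<in> prod_set n A \<longleftrightarrow> (\<forall>i<n. x i \<in> A i)"
  by (auto simp: prod_set_def)

lemma Union_prod_set:
  "(\<Union>xs\<in>prod_set n A. prod_set n (\<lambda>i. B i (xs ! i))) = prod_set n (\<lambda>i. \<Union>x\<in>A i. B i x)"
proof
  show "prod_set n (\<lambda>i. \<Union>x\<in>A i. B i x) \<subseteq> (\<Union>xs\<in>prod_set n A. prod_set n (\<lambda>i. B i (xs ! i)))"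
  proof
    fix ys assume "ys \<in> prod_set n (\<lambda>i. \<Union>x\<in>A i. B i x)"
    then obtain x where "length ys = n" "\<forall>i<n. x i \<in> A i \<and> ys ! i \<in> B i (x i)"
      unfolding prod_set_def by simp metis
    then show "ys \<in> (\<Union>xs\<in>prod_set n A. prod_set n (\<lambda>i. B i (xs ! i)))"
      by (intro UN_I[of "map x [0..<n]"]) (auto simp: prod_set_def)
  qed
qed (auto simp: prod_set_def)

lemma Union_prod_family:
  assumes "\<And>i. i < n \<Longrightarrow> \<Union>(F i) = A i"
  shows "\<Union>{prod_set n S | S. \<forall>i<n. S i \<in> F i} = prod_set n A"
proof
  show "prod_set n A \<subseteq> \<Union>{prod_set n S | S. \<forall>i<n. S i \<in> F i}"
  proof
    fix ys assume ys: "ys \<in> prod_set n A"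
    have "\<forall>i<n. \<exists>T. T \<in> F i \<and> ys ! i \<in> T"
      using ys assms unfolding prod_set_def by blast
    then obtain S where "\<forall>i<n. S i \<in> F i \<and> ys ! i \<in> S i" by metis
    with ys show "ys \<in> \<Union>{prod_set n S | S. \<forall>i<n. S i \<in> F i}"
      by (auto simp: prod_set_def)
  qed
  show "\<Union>{prod_set n S | S. \<forall>i<n. S i \<in> F i} \<subseteq> prod_set n A"
    using assms prod_set_mono[of n _ A] by blast
qed

lemma rtrancl_coordinatewise:
  assumes xs: "xs \<in> prod_set n A" and ys: "ys \<in> prod_set n A"
    and R_A: "\<And>i. i < n \<Longrightarrow> R i \<subseteq> A i \<times> A i"
    and R_xs_ys: "\<And>i. i < n \<Longrightarrow> (xs ! i, ys ! i) \<in> (R i)\<^sup>*"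
    and coordinate_step:
      "\<And>zs i c. zs \<in> prod_set n A \<Longrightarrow> i < n \<Longrightarrow> (zs ! i, c) \<in> R i \<Longrightarrow> (zs, zs[i := c]) \<in> Q"
  shows "(xs, ys) \<in> Q\<^sup>*"
proof -
  have len: "length xs = n" "length ys = n"
    using xs ys by (auto simp: prod_set_def)
  have update: "(zs, zs[i := b]) \<in> Q\<^sup>*"
    if "(a, b) \<in> (R i)\<^sup>*" "zs \<in> prod_set n A" "zs ! i = a" "i < n" for a b i zs
    using that(1)
  proof (induction b rule: rtrancl_induct)
    case base
    then show ?case using that(3) by auto
  next
    case (step b c)
    have "b \<in> A i"
      using step.hyps(1) that(2-4) R_A by (cases rule: rtranclE) (auto simp: prod_set_def)
    then have "zs[i := b] \<in> prod_set n A"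
      using that(2,4) by (auto simp: prod_set_def nth_list_update)
    then have "(zs[i := b], zs[i := b, i := c]) \<in> Q"
      using step.hyps(2) that(2,4) by (intro coordinate_step) (auto simp: prod_set_def)
    with step.IH show ?case by simp
  qed
  let ?mix = "\<lambda>k. map (\<lambda>j. if j < k then ys ! j else xs ! j) [0..<n]"
  have "(xs, ?mix k) \<in> Q\<^sup>*" if "k \<le> n" for k
    using that
  proof (induction k)
    case 0
    then show ?case using len(1) map_nth[of xs] by simp
  next
    case (Suc k)
    have "?mix k \<in> prod_set n A" "?mix k ! k = xs ! k"
      using xs ys Suc.prems by (auto simp: prod_set_def)
    then have "(?mix k, (?mix k)[k := ys ! k]) \<in> Q\<^sup>*"
      using update[OF R_xs_ys] Suc.prems by simp
    moreover have "(?mix k)[k := ys ! k] = ?mix (Suc k)"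
      by (intro nth_equalityI) (auto simp: nth_list_update less_Suc_eq)
    moreover have "(xs, ?mix k) \<in> Q\<^sup>*"
      using Suc by simp
    ultimately show ?case
      by (metis rtrancl_trans)
  qed
  moreover have "?mix n = ys"
    using len(2) by (intro nth_equalityI) auto
  ultimately show ?thesis
    by (metis order_refl)
qed

lemma unc_fun_m1: "unc_fun {ys. length ys = 1} m \<Longrightarrow> unc_fun UNIV (m1 m)"
  unfolding unc_fun_def m1_def by (auto simp: image_Un image_subset_iff)

lemma unc_fun_nonneg: "unc_fun U m \<Longrightarrow> S \<subseteq> U \<Longrightarrow> 0 \<le> m S"
  unfolding unc_fun_def by (cases "S = {}") (auto simp: less_imp_le)

lemma unc_fun_mono: "unc_fun U m \<Longrightarrow> S \<subseteq> T \<Longrightarrow> T \<subseteq> U \<Longrightarrow> m S \<le> m T"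
  unfolding unc_fun_def by (metis Un_absorb1 max.bounded_iff order_refl subset_trans)

lemma power_less_prod:
  fixes f :: "nat \<Rightarrow> 'a::linordered_idom"
  assumes "0 < n" "0 \<le> d" "\<And>j. j < n \<Longrightarrow> d < f j"
  shows "d ^ n < (\<Prod>j<n. f j)"
proof -
  have "(\<Prod>j<n. d) < (\<Prod>j<n. f j)"
    using assms by (intro prod_mono_strict[of 0]) (auto intro: less_imp_le le_less_trans)
  then show ?thesis by simp
qed

lemma prod_le_mult_power:
  fixes f :: "nat \<Rightarrow> 'a::linordered_idom"
  assumes "i < n" "f i \<le> d" "\<And>j. j < n \<Longrightarrow> 0 \<le> f j \<and> f j \<le> D"
  shows "(\<Prod>j<n. f j) \<le> d * D ^ (n - 1)"
proof -
  have "(\<Prod>j<n. f j) \<le> (\<Prod>j<n. if j = i then d else D)"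
    using assms by (intro prod_mono) auto
  also have "\<dots> = d * (\<Prod>j\<in>{..<n} - {i}. D)"
    using assms(1) by (subst prod.remove[of _ i]) (auto intro: prod.cong)
  also have "\<dots> = d * D ^ (n - 1)"
    using assms(1) by simp
  finally show ?thesis .
qed

locale product_uvs =
  fixes n :: nat and X :: "nat \<Rightarrow> 'w \<Rightarrow> 'x" and Y :: "nat \<Rightarrow> 'w \<Rightarrow> 'y"
    and mY :: "'y list set \<Rightarrow> real"
  assumes n_pos: "0 < n"
    and mY_unc: "unc_fun {ys. length ys = 1} mY"
    and mY_norm: "mY {ys. length ys = 1} = 1"
    and prod_unc: "mY (prod_set n S) = (\<Prod>i<n. m1 mY (S i))"
    and X_prod: "rng (tuple_uv n X) = prod_set n (\<lambda>i. rng (X i))"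
    and Y_cond_prod: "xs \<in> rng (tuple_uv n X) \<Longrightarrow>
          cond_range (tuple_uv n Y) (tuple_uv n X) xs = prod_set n (\<lambda>i. cond_range (Y i) (X i) (xs ! i))"
begin

abbreviation "Xn \<equiv> tuple_uv n X"
abbreviation "Yn \<equiv> tuple_uv n Y"

abbreviation prod_family :: "(nat \<Rightarrow> 'y set set) \<Rightarrow> 'y list set set" where
  "prod_family F \<equiv> {prod_set n S | S. \<forall>i<n. S i \<in> F i}"

lemma m1_nonneg: "0 \<le> m1 mY S"
  using unc_fun_nonneg[OF unc_fun_m1[OF mY_unc]] by simp

lemma m1_mono: "S \<subseteq> T \<Longrightarrow> m1 mY S \<le> m1 mY T"
  using unc_fun_mono[OF unc_fun_m1[OF mY_unc]] by simp

lemma m1_le_one: "m1 mY S \<le> 1"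
proof -
  have "(\<lambda>y. [y]) ` UNIV = {ys. length ys = 1}"
    by (auto simp: length_Suc_conv)
  then have "m1 mY UNIV = 1"
    using mY_norm unfolding m1_def by metis
  then show ?thesis
    using m1_mono[of S UNIV] by simp
qed

lemma m1_rng_pos: "0 < m1 mY (rng (Y i))"
  using unc_fun_m1[OF mY_unc] unfolding unc_fun_def by (simp add: rng_def)

lemma rng_Yn: "rng Yn = prod_set n (\<lambda>i. rng (Y i))"
proof -
  have "rng Yn = (\<Union>xs\<in>rng Xn. cond_range Yn Xn xs)"
    by (simp add: Union_cond_range)
  also have "\<dots> = (\<Union>xs\<in>prod_set n (\<lambda>i. rng (X i)). prod_set n (\<lambda>i. cond_range (Y i) (X i) (xs ! i)))"
    using Y_cond_prod X_prod by simp
  also have "\<dots> = prod_set n (\<lambda>i. rng (Y i))"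
    using Union_prod_set[where A = "\<lambda>i. rng (X i)" and B = "\<lambda>i. cond_range (Y i) (X i)"]
    by (simp add: Union_cond_range)
  finally show ?thesis .
qed

lemma relative_unc_prod_set:
  "mY (prod_set n A) / mY (rng Yn) = (\<Prod>i<n. m1 mY (A i) / m1 mY (rng (Y i)))"
  by (simp add: rng_Yn prod_unc prod_dividef)

lemma overlap_rel_update:
  assumes delta_nonneg: "0 \<le> \<delta>"
    and delta_less: "\<And>i x. i < n \<Longrightarrow> x \<in> rng (X i) \<Longrightarrow> \<delta> < m1 mY (cond_range (Y i) (X i) x)"
    and xs: "xs \<in> rng Xn" and i: "i < n"
    and step: "(xs ! i, c) \<in> overlap_rel (m1 mY) (Y i) (X i) \<delta>"
  shows "(xs, xs[i := c]) \<in> overlap_rel mY Yn Xn (\<delta> ^ n)"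
proof -
  let ?C = "\<lambda>j. cond_range (Y j) (X j)"
  have xs': "xs[i := c] \<in> rng Xn"
    using xs i step by (auto simp: X_prod prod_set_def overlap_rel_def nth_list_update)
  have factor: "\<delta> < m1 mY (?C j (xs[i := c] ! j) \<inter> ?C j (xs ! j)) / m1 mY (rng (Y j))"
    if j: "j < n" for j
  proof (cases "j = i")
    case True
    then show ?thesis using step xs i by (simp add: overlap_rel_def X_prod prod_set_def)
  next
    case False
    have "\<delta> < m1 mY (?C j (xs ! j))"
      using delta_less j xs by (auto simp: X_prod prod_set_def)
    also have "\<dots> \<le> m1 mY (?C j (xs ! j)) / m1 mY (rng (Y j))"
      using m1_rng_pos m1_le_one m1_nonneg by (simp add: le_divide_eq mult_left_le)
    finally show ?thesis using False by simp
  qed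
  have "cond_range Yn Xn (xs[i := c]) \<inter> cond_range Yn Xn xs
      = prod_set n (\<lambda>j. ?C j (xs[i := c] ! j) \<inter> ?C j (xs ! j))"
    using Y_cond_prod xs xs' by (simp add: prod_set_Int)
  then have "mY (cond_range Yn Xn (xs[i := c]) \<inter> cond_range Yn Xn xs) / mY (rng Yn)
      = (\<Prod>j<n. m1 mY (?C j (xs[i := c] ! j) \<inter> ?C j (xs ! j)) / m1 mY (rng (Y j)))"
    by (simp add: relative_unc_prod_set)
  also have "\<delta> ^ n < \<dots>"
    using n_pos delta_nonneg factor by (intro power_less_prod)
  finally show ?thesis
    using xs xs' by (simp add: overlap_rel_def)
qed

lemma delta_connected_set_prod_set:
  assumes delta_nonneg: "0 \<le> \<delta>"
    and delta_less: "\<And>i x. i < n \<Longrightarrow> x \<in> rng (X i) \<Longrightarrow> \<delta> < m1 mY (cond_range (Y i) (X i) x)"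
    and connected: "\<And>i. i < n \<Longrightarrow> delta_connected_set (m1 mY) (Y i) (X i) \<delta> (S i)"
  shows "delta_connected_set mY Yn Xn (\<delta> ^ n) (prod_set n S)"
  unfolding delta_connected_set_def
proof (intro ballI)
  fix u u' assume u: "u \<in> prod_set n S" and u': "u' \<in> prod_set n S"
  have "\<forall>i<n. \<exists>a b. u ! i \<in> cond_range (Y i) (X i) a \<and> u' ! i \<in> cond_range (Y i) (X i) b \<and>
          (a, b) \<in> (overlap_rel (m1 mY) (Y i) (X i) \<delta>)\<^sup>*"
    using connected u u' by (auto simp: delta_connected_set_def prod_set_def delta_connected_iff_rtrancl)
  then obtain a b where ab: "\<forall>i<n. u ! i \<in> cond_range (Y i) (X i) (a i) \<and>
      u' ! i \<in> cond_range (Y i) (X i) (b i) \<and> (a i, b i) \<in> (overlap_rel (m1 mY) (Y i) (X i) \<delta>)\<^sup>*"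
    by metis
  let ?xs = "map a [0..<n]" and ?xs' = "map b [0..<n]"
  have xs: "?xs \<in> rng Xn" and xs': "?xs' \<in> rng Xn"
    using ab by (auto simp: X_prod map_in_prod_set_iff intro: rng_if_in_cond_range)
  have "(?xs, ?xs') \<in> (overlap_rel mY Yn Xn (\<delta> ^ n))\<^sup>*"
  proof (rule rtrancl_coordinatewise)
    show "?xs \<in> prod_set n (\<lambda>i. rng (X i))" "?xs' \<in> prod_set n (\<lambda>i. rng (X i))"
      using xs xs' by (simp_all add: X_prod)
    show "overlap_rel (m1 mY) (Y i) (X i) \<delta> \<subseteq> rng (X i) \<times> rng (X i)" for i
      by (auto simp: overlap_rel_def)
  qed (use ab overlap_rel_update[OF delta_nonneg delta_less] in \<open>auto simp: X_prod\<close>)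
  moreover have "u \<in> cond_range Yn Xn ?xs" "u' \<in> cond_range Yn Xn ?xs'"
    using u u' ab Y_cond_prod[OF xs] Y_cond_prod[OF xs'] by (auto simp: prod_set_def)
  ultimately show "delta_connected mY Yn Xn (\<delta> ^ n) u u'"
    unfolding delta_connected_iff_rtrancl by blast
qed

lemma Union_prod_family_eq_rng_Yn:
  assumes "\<And>i. i < n \<Longrightarrow> admissible_family (m1 mY) (Y i) (X i) \<delta> (F i)"
  shows "\<Union>(prod_family F) = rng Yn"
  unfolding rng_Yn by (rule Union_prod_family) (use assms in \<open>simp add: admissible_family_def\<close>)

lemma cond_range_Yn_subset_prod_family:
  assumes "\<And>i. i < n \<Longrightarrow> admissible_family (m1 mY) (Y i) (X i) \<delta> (F i)"
    and xs: "xs \<in> rng Xn"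
  shows "\<exists>S\<in>prod_family F. cond_range Yn Xn xs \<subseteq> S"
proof -
  have "\<forall>i<n. \<exists>T\<in>F i. cond_range (Y i) (X i) (xs ! i) \<subseteq> T"
    using assms xs by (auto simp: admissible_family_def X_prod prod_set_def)
  then obtain T where T: "\<forall>i<n. T i \<in> F i \<and> cond_range (Y i) (X i) (xs ! i) \<subseteq> T i"
    by metis
  then have "prod_set n T \<in> prod_family F"
    by blast
  moreover have "cond_range Yn Xn xs \<subseteq> prod_set n T"
    unfolding Y_cond_prod[OF xs] by (rule prod_set_mono) (use T in blast)
  ultimately show ?thesis by blast
qed

lemma prod_family_contains_cond_range_Yn:
  assumes adm: "\<And>i. i < n \<Longrightarrow> admissible_family (m1 mY) (Y i) (X i) \<delta> (F i)"
    and "P \<in> prod_family F"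
  shows "\<exists>xs\<in>rng Xn. cond_range Yn Xn xs \<subseteq> P"
proof -
  obtain S where S: "\<forall>i<n. S i \<in> F i" and P: "P = prod_set n S"
    using assms(2) by blast
  have "\<forall>i<n. \<exists>x\<in>rng (X i). cond_range (Y i) (X i) x \<subseteq> S i"
    using adm S by (auto simp: admissible_family_def)
  then obtain x where x: "\<forall>i<n. x i \<in> rng (X i) \<and> cond_range (Y i) (X i) (x i) \<subseteq> S i"
    by metis
  then have xs: "map x [0..<n] \<in> rng Xn"
    by (simp add: X_prod map_in_prod_set_iff)
  have "cond_range Yn Xn (map x [0..<n]) \<subseteq> P"
    unfolding Y_cond_prod[OF xs] P by (rule prod_set_mono) (use x in simp)
  with xs show ?thesis by blast
qed

lemma relative_unc_Int_prod_family_le: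
  assumes adm: "\<And>i. i < n \<Longrightarrow> admissible_family (m1 mY) (Y i) (X i) \<delta> (F i)"
    and P: "P \<in> prod_family F" and Q: "Q \<in> prod_family F" and ne: "P \<noteq> Q"
  shows "mY (P \<inter> Q) / mY (rng Yn)
    \<le> \<delta> * Sup {m1 mY S / m1 mY (rng (Y i)) | i S. i < n \<and> S \<in> F i} ^ (n - 1)"
proof -
  obtain A B where A: "\<forall>i<n. A i \<in> F i" and B: "\<forall>i<n. B i \<in> F i"
    and PQ: "P = prod_set n A" "Q = prod_set n B"
    using P Q by blast
  let ?dhat = "Sup {m1 mY S / m1 mY (rng (Y i)) | i S. i < n \<and> S \<in> F i}"
  obtain i where i: "i < n" "A i \<noteq> B i"
    using ne prod_set_cong unfolding PQ by blast
  have subset_rng: "S \<subseteq> rng (Y j)" if "j < n" "S \<in> F j" for j S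
    using adm[OF that(1)] that(2) by (auto simp: admissible_family_def)
  have "m1 mY S / m1 mY (rng (Y j)) \<le> 1" if "j < n" "S \<in> F j" for j S
    using m1_mono[OF subset_rng[OF that]] m1_rng_pos[of j] by simp
  then have bdd: "bdd_above {m1 mY S / m1 mY (rng (Y i)) | i S. i < n \<and> S \<in> F i}"
    by (intro bdd_aboveI[of _ 1]) blast
  have le_dhat: "m1 mY (A j \<inter> B j) / m1 mY (rng (Y j)) \<le> ?dhat" if "j < n" for j
  proof -
    have "m1 mY (A j \<inter> B j) / m1 mY (rng (Y j)) \<le> m1 mY (A j) / m1 mY (rng (Y j))"
      using m1_rng_pos[of j] by (intro divide_right_mono m1_mono) auto
    also have "\<dots> \<le> ?dhat"
      by (rule cSup_upper[OF _ bdd]) (use A that in auto)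
    finally show ?thesis .
  qed
  have "m1 mY (A i \<inter> B i) \<le> \<delta> * m1 mY (rng (Y i))"
    using adm[OF i(1)] A B i by (auto simp: admissible_family_def)
  then have le_delta: "m1 mY (A i \<inter> B i) / m1 mY (rng (Y i)) \<le> \<delta>"
    using m1_rng_pos[of i] by (simp add: pos_divide_le_eq)
  have "mY (P \<inter> Q) / mY (rng Yn) = (\<Prod>j<n. m1 mY (A j \<inter> B j) / m1 mY (rng (Y j)))"
    by (simp add: PQ prod_set_Int relative_unc_prod_set)
  also have "\<dots> \<le> \<delta> * ?dhat ^ (n - 1)"
    using i(1) le_delta le_dhat m1_nonneg m1_rng_pos by (intro prod_le_mult_power) auto
  finally show ?thesis .
qed

end

theorem lemma2:
  fixes n :: nat
    and X :: "nat \<Rightarrow> 'w \<Rightarrow> 'x" and Y :: "nat \<Rightarrow> 'w \<Rightarrow> 'y"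
    and mX :: "'x list set \<Rightarrow> real" and mY :: "'y list set \<Rightarrow> real"
    and \<delta> :: real
    and F :: "nat \<Rightarrow> 'y set set"
  assumes n_pos: "1 \<le> n"
    and mX_unc: "\<forall>k\<ge>1. unc_fun {xs. length xs = k} mX"
    and mY_unc: "\<forall>k\<ge>1. unc_fun {ys. length ys = k} mY"
    and mY_norm: "\<forall>k\<ge>1. mY {ys. length ys = k} = 1"
    and prod_unc: "\<forall>k\<ge>1. \<forall>S :: nat \<Rightarrow> 'y set. mY (prod_set k S) = (\<Prod>i<k. m1 mY (S i))"
    and X_prod: "rng (tuple_uv n X) = prod_set n (\<lambda>i. rng (X i))"
    and Y_cond_prod: "\<forall>xs\<in>rng (tuple_uv n X).
          cond_range (tuple_uv n Y) (tuple_uv n X) xs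
            = prod_set n (\<lambda>i. cond_range (Y i) (X i) (xs ! i))"
    and delta_nonneg: "0 \<le> \<delta>"
    and delta_less: "\<forall>i<n. \<forall>x\<in>rng (X i). \<delta> < m1 mY (cond_range (Y i) (X i) x)"
    and rel: "disassoc mX mY (tuple_uv n X) (tuple_uv n Y) 0 (\<delta> ^ n)
              \<or> assoc_rel mX mY (tuple_uv n X) (tuple_uv n Y) 1 (\<delta> ^ n)"
    and F_overlap: "\<forall>i<n. overlap_family (m1 mY) (Y i) (X i) \<delta> (F i)"
  shows
    "(let P = {prod_set n S | S. \<forall>i<n. S i \<in> F i};
          Xn = tuple_uv n X; Yn = tuple_uv n Y;
          dhat = Sup {m1 mY S / m1 mY (rng (Y i)) | i S. i < n \<and> S \<in> F i}
      in \<Union>P = rng Yn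
       \<and> (\<forall>S\<in>P. delta_connected_set mY Yn Xn (\<delta> ^ n) S
                 \<and> (\<exists>xs\<in>rng Xn. cond_range Yn Xn xs \<subseteq> S))
       \<and> (\<forall>xs\<in>rng Xn. \<exists>S\<in>P. cond_range Yn Xn xs \<subseteq> S)
       \<and> (\<forall>S1\<in>P. \<forall>S2\<in>P. S1 \<noteq> S2 \<longrightarrow>
            mY (S1 \<inter> S2) / mY (rng Yn) \<le> \<delta> * dhat ^ (n - 1)))"
proof -
  interpret product_uvs n X Y mY
    using n_pos mY_unc mY_norm prod_unc X_prod Y_cond_prod by unfold_locales auto
  have adm: "\<And>i. i < n \<Longrightarrow> admissible_family (m1 mY) (Y i) (X i) \<delta> (F i)"
    using F_overlap by (simp add: overlap_family_def)
  show ?thesis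
    unfolding Let_def
  proof (intro conjI ballI impI)
    show "\<Union>(prod_family F) = rng Yn"
      using adm by (rule Union_prod_family_eq_rng_Yn)
  next
    fix P assume P: "P \<in> prod_family F"
    then show "delta_connected_set mY Yn Xn (\<delta> ^ n) P"
      using adm delta_nonneg delta_less
      by (force simp: admissible_family_def intro!: delta_connected_set_prod_set)
    show "\<exists>xs\<in>rng Xn. cond_range Yn Xn xs \<subseteq> P"
      using adm P by (rule prod_family_contains_cond_range_Yn)
  next
    fix xs assume "xs \<in> rng Xn"
    with adm show "\<exists>P\<in>prod_family F. cond_range Yn Xn xs \<subseteq> P"
      by (rule cond_range_Yn_subset_prod_family)
  qed (use adm relative_unc_Int_prod_family_le in blast)
qed

end
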